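(* Let $\kappa$ be an uncountable regular cardinal, let $\mathcal{I}$ be a $\kappa$-complete proper ideal on $\kappa$ containing every bounded subset of $\kappa$, and suppose $\mathcal{I}$ has a basis of size $\kappa$. Let $\nu\in\{2,\kappa\}$. Then the $\mathcal{I}$-Borel hierarchy on ${}^{\kappa}\nu$ is increasing: for all ordinals $1\le\alpha<\beta$, $\boldsymbol{\Sigma}^0_\alpha({}^{\kappa}\nu,\tau_{\mathcal{I}})\subseteq\boldsymbol{\Sigma}^0_\beta({}^{\kappa}\nu,\tau_{\mathcal{I}})$.
   Context: A basis for $\mathcal{I}$ is a family $\mathcal{B}\subseteq\mathcal{I}$ such that every member of $\mathcal{I}$ is contained in some member of $\mathcal{B}$. ${}^{\kappa}\nu$ is the set of functions $\kappa\to\nu$; $\tau_{\mathcal{I}}$ is the topology generated by the sets $\mathbf{N}_f=\{x:f\subseteq x\}$ for $f\colon D\to\nu$ with $D\in\mathcal{I}$. $\boldsymbol{\Sigma}^0_1$ = $\tau_{\mathcal{I}}$-open sets, $\boldsymbol{\Pi}^0_1$ = $\tau_{\mathcal{I}}$-closed sets; for $\alpha>1$, $\boldsymbol{\Sigma}^0_\alpha$ is the family of unions $\bigcup_{\gamma<\kappa}A_\gamma$ with $A_\gamma\in\bigcup_{1\le\beta<\alpha}\boldsymbol{\Pi}^0_\beta$, and $\boldsymbol{\Pi}^0_\alpha$ the complements of $\boldsymbol{\Sigma}^0_\alpha$ sets. *)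

theory Defs
  imports "HOL-Analysis.Analysis"
begin

text \<open>Basic open sets N_f = {x. f \<subseteq> x} for partial functions f with domain D in the ideal I.
  A partial function D \<rightarrow> \<nu> is represented by a total g together with its domain D.\<close>
definition basic_nbhds :: "'k set set \<Rightarrow> ('k \<Rightarrow> 'v) set set" where
  "basic_nbhds I = {{x. \<forall>i\<in>D. x i = g i} | D g. D \<in> I}"

definition tau_I :: "'k set set \<Rightarrow> ('k \<Rightarrow> 'v) topology" where
  "tau_I I = topology_generated_by (basic_nbhds I)"

text \<open>The Borel hierarchy indexed by a well-order W: the element a of Field W stands for
  the ordinal 1 + otype(strict initial segment below a). So a minimal element gives Sigma_1
  (open sets); otherwise Sigma_a consists of unions of K-indexed families (K = kappa) of sets
  each of which is Pi_b (complement of a Sigma_b set) for some b strictly below a.\<close>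
inductive Borel_Sigma :: "'x topology \<Rightarrow> 'k set \<Rightarrow> 'o rel \<Rightarrow> 'o \<Rightarrow> 'x set \<Rightarrow> bool"
  for T :: "'x topology" and K :: "'k set" and W :: "'o rel" where
  open_level: "a \<in> Field W \<Longrightarrow> (\<forall>b. (b, a) \<in> W \<longrightarrow> b = a) \<Longrightarrow> openin T X
     \<Longrightarrow> Borel_Sigma T K W a X"
| union_level: "a \<in> Field W \<Longrightarrow> (\<exists>b. (b, a) \<in> W \<and> b \<noteq> a)
     \<Longrightarrow> (\<forall>i\<in>K. A i \<subseteq> topspace T \<and>
            (\<exists>b. (b, a) \<in> W \<and> b \<noteq> a \<and> Borel_Sigma T K W b (topspace T - A i)))
     \<Longrightarrow> Borel_Sigma T K W a (\<Union>i\<in>K. A i)"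

end

theory Submission
  imports Defs
begin

text \<open>Every open set \<open>X\<close> of \<open>\<tau>\<^sub>I\<close> is the union of the sets \<open>{x. N\<^sub>x\<^sub>|\<^sub>Y \<subseteq> X}\<close> for \<open>Y\<close> ranging
  over a basis of the ideal, and each of these sets is clopen, since membership in it depends
  only on the coordinates in \<open>Y \<in> I\<close>. With a basis of size \<open>\<kappa>\<close>, open sets are therefore
  \<open>\<kappa>\<close>-unions of closed sets, i.e. \<open>\<Sigma>\<^sup>0\<^sub>1 \<subseteq> \<Sigma>\<^sup>0\<^sub>2\<close>; at all higher levels the inclusion is
  immediate from the transitivity of the level ordering.\<close>

lemma finite_card_of_ordLess_infinite_card_order:
  assumes "card_order (r :: 'k rel)" and "infinite (UNIV :: 'k set)" and "finite A"
  shows "(card_of A, r) \<in> ordLess"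
proof (rule finite_ordLess_infinite)
  show "Well_order r" "infinite (Field r)"
    using assms(1,2) card_order_on_well_order_on well_order_on_Field by fastforce+
  show "Well_order (card_of A)" by (rule card_of_Well_order)
  show "finite (Field (card_of A))" using assms(3) by (simp add: Field_card_of)
qed

lemma card_order_ordIso_obtains_bij_betw:
  assumes "card_order (r :: 'k rel)" and "(card_of B, r) \<in> ordIso"
  obtains h where "bij_betw h (UNIV :: 'k set) B"
proof -
  have "(r, card_of (UNIV :: 'k set)) \<in> ordIso"
    using card_order_on_ordIso[OF assms(1) card_of_card_order_on] .
  then have "(card_of (UNIV :: 'k set), card_of B) \<in> ordIso"
    using assms(2) ordIso_symmetric ordIso_transitive by blast
  then show ?thesis using card_of_ordIso that by blast
qed

lemma topspace_tau_I:
  assumes "I \<noteq> {}"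
  shows "topspace (tau_I I) = UNIV"
proof -
  obtain D where "D \<in> I" using assms by blast
  then have "x \<in> \<Union>(basic_nbhds I)" for x :: "'a \<Rightarrow> 'b"
    unfolding basic_nbhds_def by blast
  then show ?thesis unfolding tau_I_def topology_generated_by_topspace by blast
qed

lemma openin_tau_I_if_determined:
  assumes "D \<in> I" and "\<And>x y. \<forall>i\<in>D. x i = y i \<Longrightarrow> x \<in> S \<Longrightarrow> y \<in> S"
  shows "openin (tau_I I) S"
proof -
  have nbhd_open: "openin (tau_I I) {y. \<forall>i\<in>D. y i = x i}" for x :: "'a \<Rightarrow> 'b"
    unfolding tau_I_def
    by (rule topology_generated_by_Basis) (use assms(1) in \<open>auto simp: basic_nbhds_def\<close>)
  have "S = (\<Union>x\<in>S. {y. \<forall>i\<in>D. y i = x i})"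
    using assms(2) by auto (metis assms(2))
  also have "openin (tau_I I) \<dots>"
    using nbhd_open by (intro openin_Union) auto
  finally show ?thesis .
qed

lemma openin_tau_I_imp_local:
  assumes "openin (tau_I I) U"
    and Un_closed: "\<And>D E. D \<in> I \<Longrightarrow> E \<in> I \<Longrightarrow> D \<union> E \<in> I"
  shows "\<forall>x\<in>U. \<exists>D\<in>I. \<forall>y. (\<forall>i\<in>D. y i = x i) \<longrightarrow> y \<in> U"
proof -
  have "generate_topology_on (basic_nbhds I) U"
    using assms(1) unfolding tau_I_def by (rule openin_topology_generated_by)
  then show ?thesis
  proof (induction rule: generate_topology_on.induct)
    case (Int a b)
    show ?case
    proof
      fix x assume "x \<in> a \<inter> b"
      then obtain D E where "D \<in> I" "E \<in> I"
        "\<forall>y. (\<forall>i\<in>D. y i = x i) \<longrightarrow> y \<in> a" "\<forall>y. (\<forall>i\<in>E. y i = x i) \<longrightarrow> y \<in> b"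
        using Int.IH by blast
      then show "\<exists>D\<in>I. \<forall>y. (\<forall>i\<in>D. y i = x i) \<longrightarrow> y \<in> a \<inter> b"
        by (intro bexI[of _ "D \<union> E"]) (auto intro: Un_closed)
    qed
  next
    case (UN K)
    show ?case
    proof
      fix x assume "x \<in> \<Union>K"
      then obtain k where k: "k \<in> K" "x \<in> k" by blast
      then obtain D where "D \<in> I" "\<forall>y. (\<forall>i\<in>D. y i = x i) \<longrightarrow> y \<in> k"
        using UN.IH[OF k(1)] by blast
      then show "\<exists>D\<in>I. \<forall>y. (\<forall>i\<in>D. y i = x i) \<longrightarrow> y \<in> \<Union>K"
        using k(1) by blast
    qed
  next
    case (Basis s)
    then obtain D g where s: "s = {x. \<forall>i\<in>D. x i = g i}" "D \<in> I"
      unfolding basic_nbhds_def by blast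
    show ?case
    proof
      fix x assume "x \<in> s"
      then show "\<exists>D\<in>I. \<forall>y. (\<forall>i\<in>D. y i = x i) \<longrightarrow> y \<in> s"
        using s by (intro bexI[of _ D]) auto
    qed
  qed simp
qed

definition determined_core :: "'k set \<Rightarrow> ('k \<Rightarrow> 'v) set \<Rightarrow> ('k \<Rightarrow> 'v) set" where
  "determined_core D X = {x. \<forall>y. (\<forall>i\<in>D. y i = x i) \<longrightarrow> y \<in> X}"

lemma determined_core_antimono: "D \<subseteq> E \<Longrightarrow> determined_core D X \<subseteq> determined_core E X"
  unfolding determined_core_def by blast

lemma openin_tau_I_Compl_determined_core:
  assumes "D \<in> I"
  shows "openin (tau_I I) (- determined_core D X)"
  by (rule openin_tau_I_if_determined[OF assms]) (auto simp: determined_core_def)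

lemma openin_tau_I_eq_Union_determined_core:
  assumes "openin (tau_I I) U"
    and "\<And>D E. D \<in> I \<Longrightarrow> E \<in> I \<Longrightarrow> D \<union> E \<in> I"
    and cofinal: "\<And>D. D \<in> I \<Longrightarrow> \<exists>k. D \<subseteq> h k"
  shows "U = (\<Union>k. determined_core (h k) U)"
proof
  show "U \<subseteq> (\<Union>k. determined_core (h k) U)"
  proof
    fix x assume "x \<in> U"
    then obtain D where "D \<in> I" and "x \<in> determined_core D U"
      using openin_tau_I_imp_local[OF assms(1,2)] unfolding determined_core_def by blast
    moreover obtain k where "D \<subseteq> h k" using cofinal \<open>D \<in> I\<close> by blast
    ultimately have "x \<in> determined_core (h k) U"
      using determined_core_antimono by blast
    then show "x \<in> (\<Union>k. determined_core (h k) U)" by blast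
  qed
  show "(\<Union>k. determined_core (h k) U) \<subseteq> U"
    unfolding determined_core_def by blast
qed

lemma Borel_Sigma_Union_clopen:
  assumes "(a, b) \<in> W" and "a \<noteq> b" and a_min: "\<forall>c. (c, a) \<in> W \<longrightarrow> c = a"
    and clopen: "\<forall>i\<in>K. C i \<subseteq> topspace T \<and> openin T (topspace T - C i)"
  shows "Borel_Sigma T K W b (\<Union>i\<in>K. C i)"
proof (rule Borel_Sigma.union_level)
  have "a \<in> Field W" using assms(1) by (auto simp: Field_def)
  then have "Borel_Sigma T K W a (topspace T - C i)" if "i \<in> K" for i
    using a_min clopen that by (blast intro: Borel_Sigma.open_level)
  then show "\<forall>i\<in>K. C i \<subseteq> topspace T \<and>
      (\<exists>c. (c, b) \<in> W \<and> c \<noteq> b \<and> Borel_Sigma T K W c (topspace T - C i))"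
    using clopen assms(1,2) by blast
qed (use assms(1,2) in \<open>auto simp: Field_def\<close>)

lemma Borel_Sigma_raise_nonminimal_level:
  assumes "trans W" and "antisym W" and "(a, b) \<in> W" and "a \<noteq> b"
    and "Borel_Sigma T K W a X" and "\<exists>c. (c, a) \<in> W \<and> c \<noteq> a"
  shows "Borel_Sigma T K W b X"
  using assms(5)
proof cases
  case (union_level A)
  have below_b: "(c, b) \<in> W \<and> c \<noteq> b" if "(c, a) \<in> W" "c \<noteq> a" for c
    using that assms(1-4) by (meson antisymD transD)
  have "\<forall>i\<in>K. A i \<subseteq> topspace T \<and>
      (\<exists>c. (c, b) \<in> W \<and> c \<noteq> b \<and> Borel_Sigma T K W c (topspace T - A i))"
    using union_level(4) below_b by meson
  then have "Borel_Sigma T K W b (\<Union>i\<in>K. A i)"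
    using assms(3,4) by (intro Borel_Sigma.union_level) (auto simp: Field_def)
  then show ?thesis using union_level(1) by simp
qed (use assms(6) in blast)

lemma Borel_Sigma_mono_level:
  assumes "trans W" and "antisym W" and "(a, b) \<in> W" and "a \<noteq> b"
    and open_eq_Union: "\<And>X. openin T X \<Longrightarrow> X = (\<Union>i\<in>K. C X i)"
    and clopen: "\<And>X. openin T X \<Longrightarrow>
      \<forall>i\<in>K. C X i \<subseteq> topspace T \<and> openin T (topspace T - C X i)"
    and "Borel_Sigma T K W a X"
  shows "Borel_Sigma T K W b X"
proof (cases "\<exists>c. (c, a) \<in> W \<and> c \<noteq> a")
  case True
  then show ?thesis by (rule Borel_Sigma_raise_nonminimal_level[OF assms(1-4,7)])
next
  case False
  then have a_min: "\<forall>c. (c, a) \<in> W \<longrightarrow> c = a" by blast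
  from assms(7) have "openin T X"
    by cases (use False in blast)+
  then have "Borel_Sigma T K W b (\<Union>i\<in>K. C X i)"
    by (intro Borel_Sigma_Union_clopen[OF assms(3,4) a_min] clopen)
  then show ?thesis using open_eq_Union[OF \<open>openin T X\<close>] by simp
qed

theorem corollary4p5:
  fixes r :: "'k rel" and I :: "'k set set" and W :: "'o rel"
    and T :: "('k \<Rightarrow> 'v) topology"
  assumes kappa_card: "card_order r"
    and kappa_regular: "regularCard r"
    and kappa_uncountable: "\<not> countable (UNIV :: 'k set)"
    and ideal_down: "\<And>X Y. X \<in> I \<Longrightarrow> Y \<subseteq> X \<Longrightarrow> Y \<in> I"
    and ideal_complete: "\<And>F. F \<subseteq> I \<Longrightarrow> (card_of F, r) \<in> ordLess \<Longrightarrow> \<Union>F \<in> I"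
    and ideal_proper: "UNIV \<notin> I"
    and ideal_bounded: "\<And>X c. (\<forall>x\<in>X. (x, c) \<in> r) \<Longrightarrow> X \<in> I"
    and ideal_basis: "\<exists>B \<subseteq> I. (card_of B, r) \<in> ordIso \<and> (\<forall>X\<in>I. \<exists>Y\<in>B. X \<subseteq> Y)"
    and nu: "(card_of (UNIV :: 'v set), card_of (UNIV :: bool set)) \<in> ordIso \<or> (card_of (UNIV :: 'v set), r) \<in> ordIso"
    and T_def: "T = tau_I I"
    and W: "Well_order W"
    and ab: "(a, b) \<in> W" "a \<noteq> b"
  shows "{X. Borel_Sigma T (UNIV :: 'k set) W a X} \<subseteq> {X. Borel_Sigma T (UNIV :: 'k set) W b X}"
proof -
  have Un_closed: "D \<union> E \<in> I" if "D \<in> I" "E \<in> I" for D E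
  proof -
    have "(card_of {D, E}, r) \<in> ordLess"
      using kappa_card kappa_uncountable countable_finite
      by (intro finite_card_of_ordLess_infinite_card_order) auto
    then show ?thesis using ideal_complete[of "{D, E}"] that by simp
  qed
  have "{} \<in> I" using ideal_bounded[of "{}"] by simp
  then have topspace: "topspace T = UNIV" using T_def topspace_tau_I by auto
  obtain B where B: "B \<subseteq> I" "(card_of B, r) \<in> ordIso" "\<forall>X\<in>I. \<exists>Y\<in>B. X \<subseteq> Y"
    using ideal_basis by blast
  obtain h where h: "bij_betw h (UNIV :: 'k set) B"
    using card_order_ordIso_obtains_bij_betw[OF kappa_card B(2)] .
  have h_I: "h k \<in> I" for k using h B(1) by (auto simp: bij_betw_def)
  have h_cofinal: "\<exists>k. D \<subseteq> h k" if "D \<in> I" for D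
  proof -
    from B(3) \<open>D \<in> I\<close> obtain Y where "Y \<in> B" "D \<subseteq> Y" by blast
    moreover have "B = range h" using h by (simp add: bij_betw_def)
    ultimately show ?thesis by blast
  qed
  have open_eq_Union: "X = (\<Union>k\<in>UNIV. determined_core (h k) X)" if "openin T X" for X
    using that unfolding T_def by (rule openin_tau_I_eq_Union_determined_core[OF _ Un_closed h_cofinal])
  have clopen: "\<forall>k\<in>UNIV. determined_core (h k) X \<subseteq> topspace T \<and>
      openin T (topspace T - determined_core (h k) X)" for X
    using openin_tau_I_Compl_determined_core[OF h_I, where X = X] T_def topspace by (simp add: Compl_eq_Diff_UNIV)
  have "trans W" "antisym W"
    using W by (auto simp: well_order_on_def linear_order_on_def partial_order_on_def preorder_on_def)
  from Borel_Sigma_mono_level[where C = "\<lambda>X k. determined_core (h k) X",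
      OF this ab open_eq_Union clopen]
  show ?thesis by blast
qed

end
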